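(* Let $Y$ be a real Hilbert space, let $T\colon Y\to Y$ be a bounded linear operator that is bijective, let $\lambda>0$, and suppose that $\langle x, Tx\rangle+\lambda\|Tx\|^2\le 0$ for all $x\in Y$. Then for every maximally monotone multifunction $M\colon Y\rightrightarrows Y$, the multifunction $MT$ (given by $y\mapsto M(Ty)$) has a unique fixed point, i.e. there is exactly one $y\in Y$ with $y\in M(Ty)$. *)

theory Defs
  imports "HOL-Analysis.Analysis"
begin

definition graph_mf :: "('a \<Rightarrow> 'b set) \<Rightarrow> ('a \<times> 'b) set" where
  "graph_mf M = {(x, u). u \<in> M x}"

definition monotone_mf :: "('a::real_inner \<Rightarrow> 'a set) \<Rightarrow> bool" where
  "monotone_mf M \<longleftrightarrow> (\<forall>x y u v. u \<in> M x \<longrightarrow> v \<in> M y \<longrightarrow> inner (x - y) (u - v) \<ge> 0)"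

definition maximal_monotone_mf :: "('a::real_inner \<Rightarrow> 'a set) \<Rightarrow> bool" where
  "maximal_monotone_mf M \<longleftrightarrow> monotone_mf M \<and>
     (\<forall>M'. monotone_mf M' \<longrightarrow> graph_mf M \<subseteq> graph_mf M' \<longrightarrow> graph_mf M' = graph_mf M)"

end

(*
  Put S = inv T. By the bounded inverse theorem S is bounded, and the hypothesis at the point S v
  says inner v (S v) <= -lam * norm v ^ 2. Hence for small gamma > 0 the map I + gamma S is a
  strict contraction. By Minty's theorem the resolvent J = (I + gamma M)^-1 is defined everywhere,
  and it is nonexpansive, so J o (I + gamma S) has a fixed point x by Banach's fixed point
  theorem; it satisfies S x : M x, i.e. y = S x solves y : M (T y). Two solutions y1, y2 give
  0 <= inner (T (y1 - y2)) (y1 - y2) <= -lam * norm (T (y1 - y2)) ^ 2, so they coincide.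

  Minty's theorem rests on the Debrunner-Flor lemma: for a monotone set G the closed balls
  {x. inner (a - x) (u + x) >= 0}, (a, u) : G, have a common point. For finitely many balls this
  is a minimax argument on the convex hull of the points (a, u, inner a u); in general it follows
  since closed bounded convex subsets of a Hilbert space have the finite intersection property.
  The same property shows that T maps closed balls onto closed sets, which with Baire's theorem
  gives the bounded inverse theorem.
*)
theory Submission
  imports Defs
begin

section \<open>Closed bounded convex sets in Hilbert space\<close>

lemma norm_diff_sq_le_near_min_norm:
  fixes x y :: "'a::real_inner"
  assumes "convex K" "x \<in> K" "y \<in> K" "\<And>v. v \<in> K \<Longrightarrow> d \<le> (norm v)\<^sup>2"
    and "(norm x)\<^sup>2 \<le> d + e" "(norm y)\<^sup>2 \<le> d + e"
  shows "(norm (x - y))\<^sup>2 \<le> 4 * e"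
proof -
  have "(1/2) *\<^sub>R x + (1/2) *\<^sub>R y \<in> K"
    using assms(1-3) by (intro convexD) auto
  then have "d \<le> (norm ((1/2) *\<^sub>R x + (1/2) *\<^sub>R y))\<^sup>2"
    by (rule assms(4))
  moreover have "(norm (x - y))\<^sup>2 = 2 * (norm x)\<^sup>2 + 2 * (norm y)\<^sup>2 - 4 * (norm ((1/2) *\<^sub>R x + (1/2) *\<^sub>R y))\<^sup>2"
    unfolding power2_norm_eq_inner
    by (simp add: inner_commute algebra_simps)
  ultimately show ?thesis
    using assms(5,6) by linarith
qed

lemma Cauchy_if_dist_le_tendsto_0:
  fixes X :: "nat \<Rightarrow> 'a::metric_space"
  assumes dist: "\<And>m n. n \<le> m \<Longrightarrow> dist (X m) (X n) \<le> e n" and e: "e \<longlonglongrightarrow> 0"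
  shows "Cauchy X"
proof (rule metric_CauchyI)
  fix r :: real
  assume "r > 0"
  then obtain N where N: "\<And>n. n \<ge> N \<Longrightarrow> e n < r"
    using LIMSEQ_D[OF e \<open>r > 0\<close>] by force
  have "dist (X m) (X n) < r" if "n \<ge> N" "n \<le> m" for m n
    using dist[OF that(2)] N[OF that(1)] by linarith
  then show "\<exists>N. \<forall>m\<ge>N. \<forall>n\<ge>N. dist (X m) (X n) < r"
    by (metis dist_commute nle_le)
qed

lemma near_min_norm_sequences_converge:
  fixes K :: "nat \<Rightarrow> 'a::{real_inner, complete_space} set"
  assumes K: "decseq K" "\<And>n. convex (K n)" and \<epsilon>: "decseq \<epsilon>" "\<epsilon> \<longlonglongrightarrow> 0"
    and lower: "\<And>n v. v \<in> K n \<Longrightarrow> D - \<epsilon> n \<le> (norm v)\<^sup>2"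
    and near: "\<And>n. \<exists>x\<in>K n. (norm x)\<^sup>2 \<le> D + \<epsilon> n"
  shows "\<exists>p. \<forall>ys. (\<forall>n. ys n \<in> K n \<and> (norm (ys n))\<^sup>2 \<le> D + \<epsilon> n) \<longrightarrow> ys \<longlonglongrightarrow> p"
proof -
  define \<delta> where "\<delta> n = sqrt (8 * \<epsilon> n)" for n
  have \<delta>: "\<delta> \<longlonglongrightarrow> 0"
    unfolding \<delta>_def using tendsto_real_sqrt[OF tendsto_mult_right_zero[OF \<epsilon>(2), of 8]] by simp
  have close: "norm (x - y) \<le> \<delta> n"
    if "x \<in> K n" "y \<in> K n" "(norm x)\<^sup>2 \<le> D + \<epsilon> n" "(norm y)\<^sup>2 \<le> D + \<epsilon> n" for x y n
  proof -
    have "(norm (x - y))\<^sup>2 \<le> 4 * (2 * \<epsilon> n)"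
      by (rule norm_diff_sq_le_near_min_norm[OF K(2) that(1,2) lower]) (use that in auto)
    then show ?thesis
      unfolding \<delta>_def by (simp add: real_le_rsqrt)
  qed
  obtain xs where xs: "\<And>n. xs n \<in> K n" "\<And>n. (norm (xs n))\<^sup>2 \<le> D + \<epsilon> n"
    using near by metis
  have "Cauchy xs"
  proof (rule Cauchy_if_dist_le_tendsto_0[OF _ \<delta>])
    fix m n :: nat
    assume "n \<le> m"
    then have "xs m \<in> K n" "(norm (xs m))\<^sup>2 \<le> D + \<epsilon> n"
      using xs[of m] decseqD[OF K(1)] decseqD[OF \<epsilon>(1)] by (blast, smt (verit))
    then show "dist (xs m) (xs n) \<le> \<delta> n"
      using close xs by (simp add: dist_norm)
  qed
  then obtain p where p: "xs \<longlonglongrightarrow> p"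
    using Cauchy_convergent_iff convergent_def by blast
  have "ys \<longlonglongrightarrow> p" if ys: "\<forall>n. ys n \<in> K n \<and> (norm (ys n))\<^sup>2 \<le> D + \<epsilon> n" for ys
  proof (rule Lim_transform[OF p])
    show "(\<lambda>n. ys n - xs n) \<longlonglongrightarrow> 0"
      by (rule Lim_null_comparison[OF _ \<delta>]) (use close ys xs in auto)
  qed
  then show ?thesis
    by blast
qed

lemma closed_convex_bounded_imp_fip_image:
  fixes C :: "'i \<Rightarrow> 'a::{real_inner, complete_space} set"
  assumes closed: "\<And>i. i \<in> I \<Longrightarrow> closed (C i)" and convex: "\<And>i. i \<in> I \<Longrightarrow> convex (C i)"
    and bounded: "\<And>i. i \<in> I \<Longrightarrow> bounded (C i)"
    and fip: "\<And>J. finite J \<Longrightarrow> J \<subseteq> I \<Longrightarrow> \<Inter>(C ` J) \<noteq> {}"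
  shows "\<Inter>(C ` I) \<noteq> {}"
proof (cases "I = {}")
  case False
  then obtain i0 where i0: "i0 \<in> I"
    by blast
  \<comment> \<open>Let D be the supremum over finite J of the squared distance d J from 0 to the intersection
    over J. Near-minimal points for an increasing chain of J with d J \<rightarrow> D converge, and adding
    any single index to the chain does not change the limit, which therefore lies in every C i.\<close>
  define \<J> where "\<J> = {J. finite J \<and> J \<subseteq> I \<and> i0 \<in> J}"
  define d where "d J = (INF x\<in>\<Inter>(C ` J). (norm x)\<^sup>2)" for J
  have ne: "\<Inter>(C ` J) \<noteq> {}" if "J \<in> \<J>" for J
    using fip that unfolding \<J>_def by auto
  have bdd: "bdd_below ((\<lambda>x. (norm x)\<^sup>2) ` X)" for X :: "'a set"
    by (rule bdd_belowI2[of _ 0]) simp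
  have d_le: "d J \<le> (norm x)\<^sup>2" if "x \<in> \<Inter>(C ` J)" for J x
    unfolding d_def using bdd that by (rule cINF_lower)
  have d_mono: "d J \<le> d J'" if "J' \<in> \<J>" "J \<subseteq> J'" for J J'
    unfolding d_def using ne[OF that(1)] bdd by (rule cINF_superset_mono) (use that(2) in auto)
  obtain R where R: "\<And>x. x \<in> C i0 \<Longrightarrow> norm x \<le> R"
    using bounded[OF i0] by (auto simp: bounded_iff)
  have "d J \<le> R\<^sup>2" if J: "J \<in> \<J>" for J
  proof -
    obtain x where x: "x \<in> \<Inter>(C ` J)"
      using ne[OF J] by blast
    then have "norm x \<le> R"
      using R J unfolding \<J>_def by blast
    then show ?thesis
      using d_le[OF x] by (meson norm_ge_zero order.trans power_mono)
  qed
  then have bddD: "bdd_above (d ` \<J>)"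
    by (rule bdd_aboveI2)
  define D where "D = (SUP J\<in>\<J>. d J)"
  define \<epsilon> where "\<epsilon> n = inverse (real (Suc n))" for n
  have \<epsilon>_pos: "\<epsilon> n > 0" for n
    unfolding \<epsilon>_def by simp
  have near: "\<exists>x\<in>\<Inter>(C ` J). (norm x)\<^sup>2 \<le> D + \<epsilon> n" if J: "J \<in> \<J>" for J n
  proof -
    have "d J < D + \<epsilon> n"
      using cSUP_upper[OF J bddD] \<epsilon>_pos[of n] unfolding D_def by linarith
    then show ?thesis
      using cINF_less_iff[OF ne[OF J] bdd] unfolding d_def by force
  qed
  have "{i0} \<in> \<J>"
    unfolding \<J>_def using i0 by simp
  then have "\<exists>J\<in>\<J>. D - \<epsilon> n < d J" for n
    using less_cSUP_iff[OF _ bddD, of "D - \<epsilon> n"] unfolding D_def \<epsilon>_def by auto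
  then obtain Js where Js: "\<And>n. Js n \<in> \<J>" "\<And>n. D - \<epsilon> n < d (Js n)"
    by metis
  define H where "H n = (\<Union>k\<le>n. Js k)" for n
  have H: "H n \<in> \<J>" for n
    using Js(1) unfolding H_def \<J>_def by auto
  have "decseq (\<lambda>n. \<Inter>(C ` H n))"
    unfolding decseq_def H_def by fastforce
  moreover have "convex (\<Inter>(C ` H n))" for n
    using H[of n] convex unfolding \<J>_def by (auto intro: convex_INT)
  moreover have "decseq \<epsilon>"
    unfolding \<epsilon>_def decseq_def by (simp add: le_imp_inverse_le)
  moreover have "\<epsilon> \<longlonglongrightarrow> 0"
    unfolding \<epsilon>_def by (rule LIMSEQ_inverse_real_of_nat)
  moreover have "D - \<epsilon> n \<le> (norm v)\<^sup>2" if "v \<in> \<Inter>(C ` H n)" for n v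
    using Js(2)[of n] d_mono[OF H, of "Js n" n] d_le[OF that] unfolding H_def by fastforce
  ultimately obtain p where p: "\<And>ys. \<forall>n. ys n \<in> \<Inter>(C ` H n) \<and> (norm (ys n))\<^sup>2 \<le> D + \<epsilon> n \<Longrightarrow> ys \<longlonglongrightarrow> p"
    using near_min_norm_sequences_converge[of "\<lambda>n. \<Inter>(C ` H n)" \<epsilon> D] near[OF H] by blast
  have "p \<in> C i" if i: "i \<in> I" for i
  proof -
    have "insert i (H n) \<in> \<J>" for n
      using H[of n] i unfolding \<J>_def by auto
    then have "\<forall>n. \<exists>y\<in>\<Inter>(C ` insert i (H n)). (norm y)\<^sup>2 \<le> D + \<epsilon> n"
      using near by blast
    then obtain ys where ys: "\<And>n. ys n \<in> \<Inter>(C ` insert i (H n))" "\<And>n. (norm (ys n))\<^sup>2 \<le> D + \<epsilon> n"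
      by metis
    then have "ys \<longlonglongrightarrow> p"
      by (intro p) auto
    then show ?thesis
      using closed[OF i] ys(1) closed_sequentially[of "C i" ys p] by blast
  qed
  then show ?thesis
    by blast
qed simp

lemma closed_bounded_linear_image_cball:
  fixes T :: "'a::{real_inner, complete_space} \<Rightarrow> 'b::real_normed_vector"
  assumes T: "bounded_linear T"
  shows "closed (T ` cball 0 r)"
proof -
  \<comment> \<open>This is weak compactness of the ball, in the form of the intersection property.\<close>
  have "x \<in> T ` cball 0 r" if x: "x \<in> closure (T ` cball 0 r)" for x
  proof -
    define C where "C e = cball 0 r \<inter> T -` cball x e" for e
    have "\<Inter>(C ` {0<..}) \<noteq> {}"
    proof (rule closed_convex_bounded_imp_fip_image)
      have "continuous_on UNIV T"
        using T by (simp add: linear_continuous_on)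
      then show "closed (C e)" for e
        unfolding C_def by (intro closed_Int closed_cball closed_vimage) auto
      show "convex (C e)" for e
        unfolding C_def using T
        by (intro convex_Int convex_cball convex_linear_vimage) (simp add: bounded_linear.linear)
      show "bounded (C e)" for e
        unfolding C_def by (simp add: bounded_Int)
      have nonempty: "C e \<noteq> {}" if "e > 0" for e
        using x that unfolding C_def closure_approachable by (fastforce simp: dist_commute)
      show "\<Inter>(C ` J) \<noteq> {}" if J: "finite J" "J \<subseteq> {0<..}" for J
      proof (cases "J = {}")
        case False
        have "C (Min J) \<subseteq> C e" if "e \<in> J" for e
          using Min_le[OF J(1) that] unfolding C_def by auto
        then have "C (Min J) \<subseteq> \<Inter>(C ` J)"
          by blast
        moreover have "C (Min J) \<noteq> {}"
          using J Min_in[OF J(1) False] by (intro nonempty) auto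
        ultimately show ?thesis
          by blast
      qed simp
    qed
    then obtain y where "y \<in> \<Inter>(C ` {0<..})"
      by blast
    then have y: "y \<in> cball 0 r" "\<forall>e>0. dist x (T y) \<le> e"
      unfolding C_def by auto
    have "T y = x"
      using field_le_epsilon[of "dist x (T y)" 0] y(2) by simp
    then show ?thesis
      using y(1) by auto
  qed
  then show ?thesis
    using closure_subset_eq by blast
qed

lemma surj_bounded_linear_image_cball_interior:
  fixes T :: "'a::{real_inner, complete_space} \<Rightarrow> 'b::{real_normed_vector, complete_space}"
  assumes T: "bounded_linear T" and surj: "surj T"
  shows "\<exists>n::nat. interior (T ` cball 0 (real n)) \<noteq> {}"
proof (rule ccontr)
  define E where "E n = T ` cball 0 (real n)" for n :: nat
  assume "\<not> (\<exists>n. interior (T ` cball 0 (real n)) \<noteq> {})"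
  then have "euclidean interior_of \<Union>(range E) = {}"
    unfolding E_def
    by (intro Baire_category_alt)
      (auto simp: completely_metrizable_space_euclidean closed_bounded_linear_image_cball T
        closed_closedin[symmetric])
  moreover have "\<Union>(range E) = UNIV"
  proof -
    have "T y \<in> E (nat \<lceil>norm y\<rceil>)" for y
      unfolding E_def by (intro imageI) (simp add: real_nat_ceiling_ge)
    then show ?thesis
      using surj by (metis UNIV_eq_I UN_iff rangeI surjD)
  qed
  ultimately show False
    by simp
qed

lemma bij_bounded_linear_imp_inv_bounded_linear:
  fixes T :: "'a::{real_inner, complete_space} \<Rightarrow> 'b::{real_normed_vector, complete_space}"
  assumes T: "bounded_linear T" and bij: "bij T"
  shows "bounded_linear (inv T)"
proof -
  interpret T: bounded_linear T
    by (fact T)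
  have inv_T: "inv T (T y) = y" for y
    using bij by (simp add: bij_is_inj inv_f_f)
  have T_inv: "T (inv T x) = x" for x
    using bij by (simp add: bij_is_surj surj_f_inv_f)
  have lin: "linear (inv T)"
  proof (rule linearI)
    show "inv T (x + y) = inv T x + inv T y" for x y
      by (metis T.add T_inv inv_T)
    show "inv T (c *\<^sub>R x) = c *\<^sub>R inv T x" for c x
      by (metis T.scale T_inv inv_T)
  qed
  obtain n c r where r: "r > 0" "ball c r \<subseteq> T ` cball 0 (real n)"
    using surj_bounded_linear_image_cball_interior[OF T bij_is_surj[OF bij]]
    by (meson ex_in_conv mem_interior)
  have small: "norm (inv T v) \<le> real n" if v: "norm v < r" for v
  proof -
    have "c + v \<in> T ` cball 0 (real n)" "c - v \<in> T ` cball 0 (real n)"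
      using r(2) v by (auto simp: dist_norm)
    then obtain w1 w2 where w: "norm w1 \<le> real n" "T w1 = c + v" "norm w2 \<le> real n" "T w2 = c - v"
      by (metis imageE mem_cball_0)
    have "(c + v) - (c - v) = 2 *\<^sub>R v"
      by (simp add: scaleR_2)
    then have "T ((1/2) *\<^sub>R (w1 - w2)) = v"
      using w(2,4) by (simp add: T.diff T.scale)
    then have "inv T v = (1/2) *\<^sub>R (w1 - w2)"
      using inv_T by metis
    also have "norm \<dots> \<le> (norm w1 + norm w2) / 2"
      using norm_triangle_ineq4[of w1 w2] by simp
    also have "\<dots> \<le> real n"
      using w(1,3) by simp
    finally show ?thesis .
  qed
  have "norm (inv T x) \<le> norm x * (2 * real n / r)" for x
  proof (cases "x = 0")
    case True
    then show ?thesis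
      using lin by (simp add: linear_0)
  next
    case False
    define s where "s = r / (2 * norm x)"
    have s: "s > 0"
      unfolding s_def using False r(1) by simp
    have "s * norm (inv T x) = norm (inv T (s *\<^sub>R x))"
      using lin s by (simp add: linear_scale)
    also have "\<dots> \<le> real n"
      using False r(1) s by (intro small) (simp add: s_def)
    finally show ?thesis
      using False r(1) unfolding s_def by (simp add: field_simps)
  qed
  then show ?thesis
    using lin by (intro bounded_linear_intro[where K = "2 * real n / r"]) (auto simp: linear_add linear_scale)
qed

section \<open>Monotone sets and the Debrunner--Flor lemma\<close>

lemma linear_coeff_nonneg_if_quadratic_nonneg:
  fixes \<beta> \<gamma> :: real
  assumes "\<And>t. 0 < t \<Longrightarrow> t \<le> 1 \<Longrightarrow> 0 \<le> \<beta> * t + \<gamma> * t\<^sup>2"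
  shows "0 \<le> \<beta>"
proof (rule tendsto_lowerbound)
  show "((\<lambda>t. \<beta> + \<gamma> * t) \<longlongrightarrow> \<beta>) (at_right 0)"
    by (auto intro!: tendsto_eq_intros)
  have "0 \<le> \<beta> + \<gamma> * t" if "0 < t" "t < 1" for t
  proof -
    have "0 \<le> t * (\<beta> + \<gamma> * t)"
      using assms[of t] that by (simp add: power2_eq_square algebra_simps)
    then show ?thesis
      using that by (simp add: zero_le_mult_iff)
  qed
  then show "\<forall>\<^sub>F t in at_right 0. 0 \<le> \<beta> + \<gamma> * t"
    unfolding eventually_at_right_field by (intro exI[of _ 1]) auto
qed simp

lemma weighted_covariance_nonneg:
  fixes a u :: "'i \<Rightarrow> 'a::real_inner"
  assumes mono: "\<And>i j. i \<in> I \<Longrightarrow> j \<in> I \<Longrightarrow> 0 \<le> inner (a i - a j) (u i - u j)"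
    and \<mu>: "\<And>i. i \<in> I \<Longrightarrow> 0 \<le> \<mu> i" "sum \<mu> I = 1"
  shows "inner (\<Sum>i\<in>I. \<mu> i *\<^sub>R a i) (\<Sum>i\<in>I. \<mu> i *\<^sub>R u i) \<le> (\<Sum>i\<in>I. \<mu> i * inner (a i) (u i))"
    (is "?P \<le> ?Q")
proof -
  let ?S = "\<lambda>f. \<Sum>i\<in>I. \<Sum>j\<in>I. \<mu> i * \<mu> j * f i j"
  have "(\<Sum>j\<in>I. \<mu> i * \<mu> j * inner (a i) (u i)) = \<mu> i * inner (a i) (u i)" for i
    using sum_distrib_left[of "\<mu> i * inner (a i) (u i)" \<mu> I] \<mu>(2) by (simp add: mult_ac)
  then have diag: "?S (\<lambda>i j. inner (a i) (u i)) = ?Q"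
    by simp
  have cross: "?S (\<lambda>i j. inner (a i) (u j)) = ?P"
    unfolding inner_sum_left by (simp add: inner_sum_right sum_distrib_left mult_ac)
  have "0 \<le> ?S (\<lambda>i j. inner (a i - a j) (u i - u j))"
    using mono \<mu>(1) by (intro sum_nonneg mult_nonneg_nonneg) auto
  also have "\<dots> = ?S (\<lambda>i j. inner (a i) (u i)) + ?S (\<lambda>i j. inner (a j) (u j))
      - ?S (\<lambda>i j. inner (a i) (u j)) - ?S (\<lambda>i j. inner (a j) (u i))"
    by (simp add: inner_diff_left inner_diff_right right_diff_distrib distrib_left sum.distrib sum_subtractf)
  also have "?S (\<lambda>i j. inner (a j) (u j)) = ?S (\<lambda>i j. inner (a i) (u i))"
    by (subst sum.swap) (simp add: mult.commute)
  also have "?S (\<lambda>i j. inner (a j) (u i)) = ?S (\<lambda>i j. inner (a i) (u j))"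
    by (subst sum.swap) (simp add: mult.commute)
  finally show ?thesis
    unfolding diag cross by simp
qed

definition monotone_set :: "('a::real_inner \<times> 'a) set \<Rightarrow> bool" where
  "monotone_set G \<longleftrightarrow> (\<forall>(a, u)\<in>G. \<forall>(b, v)\<in>G. 0 \<le> inner (a - b) (u - v))"

lemma monotone_setD:
  "monotone_set G \<Longrightarrow> (a, u) \<in> G \<Longrightarrow> (b, v) \<in> G \<Longrightarrow> 0 \<le> inner (a - b) (u - v)"
  unfolding monotone_set_def by fast

lemma inner_le_if_mem_convex_hull_monotone_lift:
  fixes F :: "('a::real_inner \<times> 'a) set"
  assumes "finite F" "monotone_set F"
    and "(A, U, Q) \<in> convex hull ((\<lambda>(a, u). (a, u, inner a u)) ` F)"
  shows "inner A U \<le> Q"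
proof -
  let ?P = "(\<lambda>(a, u). (a, u, inner a u)) ` F"
  obtain \<mu> where \<mu>: "\<And>p. p \<in> ?P \<Longrightarrow> 0 \<le> \<mu> p" "sum \<mu> ?P = 1" "(\<Sum>p\<in>?P. \<mu> p *\<^sub>R p) = (A, U, Q)"
    using assms(3) unfolding convex_hull_finite[OF finite_imageI[OF assms(1)]] by blast
  have "inner (\<Sum>p\<in>?P. \<mu> p *\<^sub>R fst p) (\<Sum>p\<in>?P. \<mu> p *\<^sub>R fst (snd p))
      \<le> (\<Sum>p\<in>?P. \<mu> p * inner (fst p) (fst (snd p)))"
    by (rule weighted_covariance_nonneg) (use \<mu> in \<open>auto intro: monotone_setD[OF assms(2)]\<close>)
  also have "\<dots> = (\<Sum>p\<in>?P. \<mu> p * snd (snd p))"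
    by (rule sum.cong) auto
  moreover have "A = (\<Sum>p\<in>?P. \<mu> p *\<^sub>R fst p)" "U = (\<Sum>p\<in>?P. \<mu> p *\<^sub>R fst (snd p))"
    "Q = (\<Sum>p\<in>?P. \<mu> p * snd (snd p))"
    using \<mu>(3) by (auto simp: prod_eq_iff fst_sum snd_sum)
  ultimately show ?thesis
    by simp
qed

lemma finite_monotone_set_related_point:
  fixes F :: "('a::real_inner \<times> 'a) set"
  assumes "finite F" "monotone_set F"
  shows "\<exists>x. \<forall>(a, u)\<in>F. 0 \<le> inner (a - x) (u + x)"
proof (cases "F = {}")
  case False
  \<comment> \<open>A point (A, U, Q) of K encodes a convex combination of the concave functions
    x \<mapsto> inner (a - x) (u + x); g is its maximum over x, attained at x = (A - U) / 2. At a
    minimiser of g over K, the one-sided derivative towards each lifted point is nonnegative.\<close>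
  define K where "K = convex hull ((\<lambda>(a, u). (a, u, inner a u)) ` F)"
  define g :: "'a \<times> 'a \<times> real \<Rightarrow> real" where "g = (\<lambda>(A, U, Q). (norm (A - U))\<^sup>2 / 4 + Q)"
  have "compact K"
    unfolding K_def using assms(1) by (simp add: finite_imp_compact_convex_hull)
  moreover have "K \<noteq> {}"
    using False by (simp add: K_def)
  moreover have "continuous_on K g"
    unfolding g_def case_prod_beta by (intro continuous_intros) auto
  ultimately obtain A U Q where k: "(A, U, Q) \<in> K" "\<And>k'. k' \<in> K \<Longrightarrow> g (A, U, Q) \<le> g k'"
    by (metis continuous_attains_inf prod_cases3)
  define D where "D = A - U"
  define x where "x = (1/2) *\<^sub>R D"
  have g_k: "g (A, U, Q) = (norm D)\<^sup>2 / 4 + Q"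
    unfolding g_def D_def by simp
  have "inner A U \<le> Q"
    using inner_le_if_mem_convex_hull_monotone_lift[OF assms] k(1) unfolding K_def .
  moreover have "(norm (A - U))\<^sup>2 = (norm (A + U))\<^sup>2 - 4 * inner A U"
    unfolding power2_norm_eq_inner by (simp add: inner_commute algebra_simps)
  ultimately have "0 \<le> g (A, U, Q)"
    using zero_le_power2[of "norm (A + U)"] unfolding g_k D_def by linarith
  moreover have "g (A, U, Q) \<le> inner (a - x) (u + x)" if "(a, u) \<in> F" for a u
  proof -
    define E where "E = (a - u) - D"
    define \<beta> where "\<beta> = inner D E / 2 + (inner a u - Q)"
    have "0 \<le> \<beta>"
    proof (rule linear_coeff_nonneg_if_quadratic_nonneg[where \<gamma> = "(norm E)\<^sup>2 / 4"])
      fix t :: real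
      assume t: "0 < t" "t \<le> 1"
      have "(1 - t) *\<^sub>R (A, U, Q) + t *\<^sub>R (a, u, inner a u) \<in> K"
        using k(1) that t unfolding K_def by (intro convexD) (auto intro: hull_inc)
      then have "g (A, U, Q) \<le> g ((1 - t) *\<^sub>R (A, U, Q) + t *\<^sub>R (a, u, inner a u))"
        by (rule k(2))
      also have "\<dots> = (norm (D + t *\<^sub>R E))\<^sup>2 / 4 + Q + t * (inner a u - Q)"
        unfolding g_def D_def E_def by (simp add: algebra_simps)
      also have "(norm (D + t *\<^sub>R E))\<^sup>2 = (norm D)\<^sup>2 + 2 * t * inner D E + t\<^sup>2 * (norm E)\<^sup>2"
        unfolding power2_norm_eq_inner by (simp add: inner_commute algebra_simps power2_eq_square)
      finally show "0 \<le> \<beta> * t + (norm E)\<^sup>2 / 4 * t\<^sup>2"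
        unfolding g_k \<beta>_def by (simp add: algebra_simps add_divide_distrib)
    qed
    moreover have "inner (a - x) (u + x) = inner a u + inner D (a - u) / 2 - (norm D)\<^sup>2 / 4"
      unfolding x_def power2_norm_eq_inner
      by (simp add: inner_commute algebra_simps) (simp add: field_simps)
    ultimately show ?thesis
      unfolding g_k \<beta>_def E_def by (simp add: inner_diff_right power2_norm_eq_inner diff_divide_distrib)
  qed
  ultimately have "0 \<le> inner (a - x) (u + x)" if "(a, u) \<in> F" for a u
    using that by (meson order.trans)
  then show ?thesis
    by blast
qed simp

lemma inner_nonneg_iff_mem_cball:
  fixes a u x :: "'a::real_inner"
  shows "0 \<le> inner (a - x) (u + x) \<longleftrightarrow> x \<in> cball ((1/2) *\<^sub>R (a - u)) (norm (a + u) / 2)"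
proof -
  have "inner (a - x) (u + x) = (norm (a + u) / 2)\<^sup>2 - (dist ((1/2) *\<^sub>R (a - u)) x)\<^sup>2"
    unfolding dist_norm power2_norm_eq_inner power_divide
    by (simp add: inner_commute algebra_simps) (simp add: field_simps)
  then show ?thesis
    by (simp add: abs_le_square_iff)
qed

lemma monotone_set_related_point:
  fixes G :: "('a::{real_inner, complete_space} \<times> 'a) set"
  assumes "monotone_set G"
  shows "\<exists>x. \<forall>(a, u)\<in>G. 0 \<le> inner (a - x) (u + x)"
proof -
  define B where "B z = cball ((1/2) *\<^sub>R (fst z - snd z)) (norm (fst z + snd z) / 2)" for z :: "'a \<times> 'a"
  have "\<Inter>(B ` G) \<noteq> {}"
  proof (rule closed_convex_bounded_imp_fip_image)
    show "\<Inter>(B ` F) \<noteq> {}" if F: "finite F" "F \<subseteq> G" for F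
    proof -
      have "monotone_set F"
        using assms F(2) unfolding monotone_set_def by blast
      then obtain x where "\<forall>(a, u)\<in>F. 0 \<le> inner (a - x) (u + x)"
        using finite_monotone_set_related_point[OF F(1)] by blast
      then have "x \<in> \<Inter>(B ` F)"
        unfolding B_def by (auto simp: inner_nonneg_iff_mem_cball)
      then show ?thesis
        by blast
    qed
  qed (auto simp: B_def)
  then obtain x where "x \<in> \<Inter>(B ` G)"
    by blast
  then have "0 \<le> inner (a - x) (u + x)" if "(a, u) \<in> G" for a u
    using that unfolding B_def by (auto simp: inner_nonneg_iff_mem_cball)
  then show ?thesis
    by blast
qed

section \<open>Maximal monotone multifunctions\<close>

lemma maximal_monotone_mf_memI:
  assumes max: "maximal_monotone_mf M" and related: "\<And>a u. u \<in> M a \<Longrightarrow> 0 \<le> inner (a - x) (u - v)"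
  shows "v \<in> M x"
proof -
  define M' where "M' = M(x := insert v (M x))"
  have mono: "monotone_mf M"
    using max unfolding maximal_monotone_mf_def by blast
  have "monotone_mf M'"
    unfolding monotone_mf_def
  proof (intro allI impI)
    fix y1 y2 u1 u2
    assume "u1 \<in> M' y1" "u2 \<in> M' y2"
    then consider "u1 \<in> M y1" "u2 \<in> M y2" | "u1 \<in> M y1" "y2 = x" "u2 = v"
      | "y1 = x" "u1 = v" "u2 \<in> M y2" | "y1 = x" "u1 = v" "y2 = x" "u2 = v"
      unfolding M'_def by (auto split: if_splits)
    then show "0 \<le> inner (y1 - y2) (u1 - u2)"
    proof cases
      case 1
      then show ?thesis
        using mono unfolding monotone_mf_def by blast
    next
      case 3
      then show ?thesis
        using related[of u2 y2] by (simp add: inner_diff_left inner_diff_right inner_commute)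
    qed (use related in auto)
  qed
  moreover have "graph_mf M \<subseteq> graph_mf M'"
    unfolding graph_mf_def M'_def by auto
  ultimately have "graph_mf M' = graph_mf M"
    using max unfolding maximal_monotone_mf_def by blast
  then show ?thesis
    unfolding graph_mf_def M'_def by auto
qed

lemma maximal_monotone_mf_resolvent_exists:
  fixes M :: "'a::{real_inner, complete_space} \<Rightarrow> 'a set"
  assumes max: "maximal_monotone_mf M" and "\<gamma> > 0"
  shows "\<exists>x u. u \<in> M x \<and> x + \<gamma> *\<^sub>R u = w"
proof -
  define G where "G = {(a, \<gamma> *\<^sub>R u - w) | a u. u \<in> M a}"
  have "monotone_set G"
    using max \<open>\<gamma> > 0\<close> unfolding G_def monotone_set_def maximal_monotone_mf_def monotone_mf_def
    by (auto simp flip: scaleR_diff_right)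
  then obtain x where x: "\<forall>(a, v)\<in>G. 0 \<le> inner (a - x) (v + x)"
    using monotone_set_related_point by blast
  define u where "u = (1 / \<gamma>) *\<^sub>R (w - x)"
  have "u \<in> M x"
  proof (rule maximal_monotone_mf_memI[OF max])
    fix a u'
    assume "u' \<in> M a"
    then have "0 \<le> inner (a - x) (\<gamma> *\<^sub>R u' - w + x)"
      using x unfolding G_def by blast
    also have "\<gamma> *\<^sub>R u' - w + x = \<gamma> *\<^sub>R (u' - u)"
      using \<open>\<gamma> > 0\<close> unfolding u_def by (simp add: algebra_simps)
    finally show "0 \<le> inner (a - x) (u' - u)"
      using \<open>\<gamma> > 0\<close> by (simp add: zero_le_mult_iff)
  qed
  moreover have "x + \<gamma> *\<^sub>R u = w"
    using \<open>\<gamma> > 0\<close> unfolding u_def by simp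
  ultimately show ?thesis
    by blast
qed

lemma monotone_mf_resolvent_nonexpansive:
  assumes "monotone_mf M" "\<gamma> \<ge> 0" "u1 \<in> M x1" "u2 \<in> M x2"
  shows "norm (x1 - x2) \<le> norm ((x1 + \<gamma> *\<^sub>R u1) - (x2 + \<gamma> *\<^sub>R u2))"
proof -
  have "0 \<le> \<gamma> * inner (x1 - x2) (u1 - u2)"
    using assms unfolding monotone_mf_def by simp
  then have "(norm (x1 - x2))\<^sup>2 \<le> inner (x1 - x2) ((x1 + \<gamma> *\<^sub>R u1) - (x2 + \<gamma> *\<^sub>R u2))"
    by (simp add: power2_norm_eq_inner algebra_simps)
  also have "\<dots> \<le> norm (x1 - x2) * norm ((x1 + \<gamma> *\<^sub>R u1) - (x2 + \<gamma> *\<^sub>R u2))"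
    by (rule norm_cauchy_schwarz)
  finally show ?thesis
    by (cases "x1 = x2") (simp_all add: power2_eq_square mult_le_cancel_left)
qed

lemma norm_add_scaleR_strongly_dissipative:
  fixes v w :: "'a::real_inner"
  assumes vw: "inner v w \<le> - lam * (norm v)\<^sup>2" and w: "norm w \<le> C * norm v" and "0 < lam" "lam \<le> C"
  shows "norm (v + (lam / C\<^sup>2) *\<^sub>R w) \<le> sqrt (1 - (lam / C)\<^sup>2) * norm v"
proof -
  define \<gamma> where "\<gamma> = lam / C\<^sup>2"
  have "\<gamma> \<ge> 0"
    using assms(3) unfolding \<gamma>_def by simp
  have \<gamma>_lam: "\<gamma> * lam = (lam / C)\<^sup>2" and \<gamma>_C: "\<gamma>\<^sup>2 * C\<^sup>2 = (lam / C)\<^sup>2"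
    using assms(3,4) unfolding \<gamma>_def by (simp_all add: power2_eq_square)
  have "(norm (v + \<gamma> *\<^sub>R w))\<^sup>2 = (norm v)\<^sup>2 + 2 * \<gamma> * inner v w + \<gamma>\<^sup>2 * (norm w)\<^sup>2"
    unfolding power2_norm_eq_inner by (simp add: inner_commute algebra_simps power2_eq_square)
  also have "\<dots> \<le> (norm v)\<^sup>2 + 2 * \<gamma> * (- lam * (norm v)\<^sup>2) + \<gamma>\<^sup>2 * (C * norm v)\<^sup>2"
    using vw w \<open>\<gamma> \<ge> 0\<close> by (intro add_mono mult_left_mono power_mono) auto
  also have "\<dots> = (1 - 2 * (\<gamma> * lam) + \<gamma>\<^sup>2 * C\<^sup>2) * (norm v)\<^sup>2"
    by (simp add: algebra_simps power_mult_distrib)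
  also have "\<dots> = (1 - (lam / C)\<^sup>2) * (norm v)\<^sup>2"
    unfolding \<gamma>_lam \<gamma>_C by (simp add: algebra_simps)
  finally have "(norm (v + \<gamma> *\<^sub>R w))\<^sup>2 \<le> (1 - (lam / C)\<^sup>2) * (norm v)\<^sup>2" .
  then have "norm (v + \<gamma> *\<^sub>R w) \<le> sqrt ((1 - (lam / C)\<^sup>2) * (norm v)\<^sup>2)"
    by (rule real_le_rsqrt)
  then show ?thesis
    unfolding \<gamma>_def by (simp add: real_sqrt_mult)
qed

lemma maximal_monotone_mf_meets_strongly_dissipative:
  fixes S :: "'a::{real_inner, complete_space} \<Rightarrow> 'a"
  assumes max: "maximal_monotone_mf M" and S: "bounded_linear S" and "lam > 0"
    and dissipative: "\<And>v. inner v (S v) \<le> - lam * (norm v)\<^sup>2"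
  shows "\<exists>x. S x \<in> M x"
proof -
  interpret S: bounded_linear S
    by (fact S)
  obtain C0 where C0: "\<And>v. norm (S v) \<le> norm v * C0"
    using S.bounded by blast
  define C where "C = max C0 lam"
  have C: "norm (S v) \<le> C * norm v" for v
    using C0[of v] unfolding C_def by (metis max.cobounded1 mult.commute mult_left_mono norm_ge_zero order.trans)
  define \<gamma> where "\<gamma> = lam / C\<^sup>2"
  define c where "c = sqrt (1 - (lam / C)\<^sup>2)"
  have "\<gamma> > 0" "0 \<le> c" "c < 1"
    using \<open>lam > 0\<close> unfolding \<gamma>_def c_def C_def by (auto simp: power_divide divide_le_eq_1)
  obtain J U where JU: "\<And>w. U w \<in> M (J w)" "\<And>w. J w + \<gamma> *\<^sub>R U w = w"
    using maximal_monotone_mf_resolvent_exists[OF max \<open>\<gamma> > 0\<close>] by metis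
  define \<Phi> where "\<Phi> x = J (x + \<gamma> *\<^sub>R S x)" for x
  have "dist (\<Phi> x) (\<Phi> y) \<le> c * dist x y" for x y
  proof -
    have "dist (\<Phi> x) (\<Phi> y) \<le> norm ((x + \<gamma> *\<^sub>R S x) - (y + \<gamma> *\<^sub>R S y))"
      using monotone_mf_resolvent_nonexpansive[of M \<gamma>, OF _ _ JU(1) JU(1)] max \<open>\<gamma> > 0\<close>
      unfolding \<Phi>_def dist_norm JU(2) maximal_monotone_mf_def by simp
    also have "(x + \<gamma> *\<^sub>R S x) - (y + \<gamma> *\<^sub>R S y) = (x - y) + \<gamma> *\<^sub>R S (x - y)"
      by (simp add: S.diff algebra_simps)
    also have "norm \<dots> \<le> c * norm (x - y)"
      unfolding \<gamma>_def c_def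
      by (rule norm_add_scaleR_strongly_dissipative) (use dissipative C \<open>lam > 0\<close> in \<open>auto simp: C_def\<close>)
    finally show ?thesis
      by (simp add: dist_norm)
  qed
  then obtain x where "\<Phi> x = x"
    using banach_fix_type[OF \<open>0 \<le> c\<close> \<open>c < 1\<close>] by blast
  then have "U (x + \<gamma> *\<^sub>R S x) = S x"
    using JU(2)[of "x + \<gamma> *\<^sub>R S x"] \<open>\<gamma> > 0\<close> unfolding \<Phi>_def by simp
  then show ?thesis
    using JU(1) \<open>\<Phi> x = x\<close> unfolding \<Phi>_def by metis
qed

lemma monotone_mf_comp_fixed_point_unique:
  fixes T :: "'a::real_inner \<Rightarrow> 'a"
  assumes M: "monotone_mf M" and T: "linear T" "inj T" and "lam > 0"
    and hyp: "\<And>x. inner x (T x) + lam * (norm (T x))\<^sup>2 \<le> 0"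
    and y: "y1 \<in> M (T y1)" "y2 \<in> M (T y2)"
  shows "y1 = y2"
proof -
  have "0 \<le> inner (T y1 - T y2) (y1 - y2)"
    using M y unfolding monotone_mf_def by blast
  then have "0 \<le> inner (y1 - y2) (T (y1 - y2))"
    by (simp add: linear_diff[OF T(1)] inner_commute)
  then have "lam * (norm (T (y1 - y2)))\<^sup>2 \<le> 0"
    using hyp[of "y1 - y2"] by linarith
  then have "T (y1 - y2) = 0"
    using \<open>lam > 0\<close> by (simp add: mult_le_0_iff)
  then show ?thesis
    using T by (metis linear_injective_0 eq_iff_diff_eq_0)
qed

theorem lemma2p9:
  fixes T :: "'a::{real_inner, complete_space} \<Rightarrow> 'a" and lam :: real
  assumes "bounded_linear T"
    and "bij T"
    and "lam > 0"
    and "\<forall>x. inner x (T x) + lam * (norm (T x))\<^sup>2 \<le> 0"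
  shows "\<forall>M :: 'a \<Rightarrow> 'a set. maximal_monotone_mf M \<longrightarrow> (\<exists>!y. y \<in> M (T y))"
proof (intro allI impI)
  fix M :: "'a \<Rightarrow> 'a set"
  assume max: "maximal_monotone_mf M"
  have T_inv: "T (inv T x) = x" for x
    using assms(2) by (simp add: bij_is_surj surj_f_inv_f)
  have "inner v (inv T v) \<le> - lam * (norm v)\<^sup>2" for v
    using assms(4)[rule_format, of "inv T v"] by (simp add: T_inv inner_commute)
  then obtain x where "inv T x \<in> M x"
    using maximal_monotone_mf_meets_strongly_dissipative[OF max _ assms(3)]
      bij_bounded_linear_imp_inv_bounded_linear[OF assms(1,2)] by blast
  then have "inv T x \<in> M (T (inv T x))"
    by (simp add: T_inv)
  moreover have "monotone_mf M"
    using max unfolding maximal_monotone_mf_def by blast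
  ultimately show "\<exists>!y. y \<in> M (T y)"
    using monotone_mf_comp_fixed_point_unique[OF _ bounded_linear.linear[OF assms(1)]
        bij_is_inj[OF assms(2)] assms(3)] assms(4)
    by blast
qed

end
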